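(* Let $k$ be fixed and let $(P_n)_{n\in\mathbb N}$ be a sequence of orthogonal projections $P_n\in M_k\otimes M_n$ satisfying condition $\mathcal C_1$ with limiting function $f$. Then for any sequence of vectors $x_n\in\mathbb C^k\otimes\mathbb C^n$ with $x_nx_n^*\le P_n$, setting $X_n=\mathrm{Tr}_{\mathbb C^n}[x_nx_n^*]$, we have $$\limsup_{n\to\infty}\mathrm{Tr}[X_nA]\le f(A)\qquad\text{for all }A\in D_k.$$
   Context: $D_k=\{A\in M_k(\mathbb C): A\ge0,\ \mathrm{Tr}A=1\}$. A sequence of orthogonal projections $P_n\in M_k\otimes M_n$ satisfies condition $\mathcal C_m$ if for every $A\in D_k$ the $m$ largest eigenvalues $\lambda_1(P_n(A\otimes I_n)P_n)\ge\dots\ge\lambda_m(P_n(A\otimes I_n)P_n)$ converge as $n\to\infty$ to a common limit $f(A)$. $\mathrm{Tr}_{\mathbb C^n}$ denotes the partial trace over the second factor. *)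

theory Defs
  imports "HOL-Library.Extended_Real" "Jordan_Normal_Form.Schur_Decomposition"
begin

(* Matrices are Jordan_Normal_Form complex matrices. C^k (x) C^n is identified with
   C^(k*n) via e_a (x) e_b |-> e_(a*n+b)  (a < k, b < n). *)

definition kron :: "complex mat \<Rightarrow> complex mat \<Rightarrow> complex mat" where
  "kron A B = mat (dim_row A * dim_row B) (dim_col A * dim_col B)
     (\<lambda>(i,j). A $$ (i div dim_row B, j div dim_col B) * B $$ (i mod dim_row B, j mod dim_col B))"

definition ptrace2 :: "nat \<Rightarrow> nat \<Rightarrow> complex mat \<Rightarrow> complex mat" where
  "ptrace2 k n M = mat k k (\<lambda>(a,c). \<Sum>b<n. M $$ (a*n+b, c*n+b))"

definition hermitian :: "complex mat \<Rightarrow> bool" where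
  "hermitian M \<longleftrightarrow> mat_adjoint M = M"

definition psd :: "nat \<Rightarrow> complex mat \<Rightarrow> bool" where
  "psd d M \<longleftrightarrow> M \<in> carrier_mat d d \<and> hermitian M \<and>
     (\<forall>v \<in> carrier_vec d. 0 \<le> Re ((M *\<^sub>v v) \<bullet>c v))"

definition mtrace :: "complex mat \<Rightarrow> complex" where
  "mtrace M = (\<Sum>i<dim_row M. M $$ (i,i))"

definition density :: "nat \<Rightarrow> complex mat set" where
  "density k = {A. psd k A \<and> mtrace A = 1}"

definition orth_proj :: "nat \<Rightarrow> complex mat \<Rightarrow> bool" where
  "orth_proj d P \<longleftrightarrow> P \<in> carrier_mat d d \<and> P * P = P \<and> hermitian P"

definition outer :: "complex vec \<Rightarrow> complex mat" where
  "outer x = mat (dim_vec x) (dim_vec x) (\<lambda>(i,j). x $ i * cnj (x $ j))"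

definition loewner_le :: "nat \<Rightarrow> complex mat \<Rightarrow> complex mat \<Rightarrow> bool" where
  "loewner_le d A B \<longleftrightarrow> A \<in> carrier_mat d d \<and> B \<in> carrier_mat d d \<and> psd d (B - A)"

(* largest eigenvalue lambda_1 of a (Hermitian, hence real-spectrum) matrix *)
definition lambda_max :: "complex mat \<Rightarrow> real" where
  "lambda_max M = Max (Re ` {ev. eigenvalue M ev})"

definition cond_C1 :: "nat \<Rightarrow> (nat \<Rightarrow> complex mat) \<Rightarrow> (complex mat \<Rightarrow> real) \<Rightarrow> bool" where
  "cond_C1 k P f \<longleftrightarrow> (\<forall>A \<in> density k.
     (\<lambda>n. lambda_max (P n * kron A (1\<^sub>m n) * P n)) \<longlonglongrightarrow> f A)"

end

(* Put K = A \<otimes> I\<^sub>n. The quantity Tr[X\<^sub>n A] is the expectation <K x\<^sub>n, x\<^sub>n>. The hypothesis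
   x\<^sub>n x\<^sub>n\<^sup>* \<le> P\<^sub>n forces P\<^sub>n x\<^sub>n = x\<^sub>n and \<parallel>x\<^sub>n\<parallel> \<le> 1, so the expectation equals
   <P\<^sub>n K P\<^sub>n x\<^sub>n, x\<^sub>n>, which by the Rayleigh principle is at most
   \<lambda>\<^sub>1(P\<^sub>n K P\<^sub>n) \<parallel>x\<^sub>n\<parallel>\<^sup>2 \<le> \<lambda>\<^sub>1(P\<^sub>n K P\<^sub>n), the latter being nonnegative as P\<^sub>n K P\<^sub>n \<ge> 0.
   Condition C\<^sub>1 says that the right-hand side tends to f(A). *)

theory Submission
  imports Defs "Jordan_Normal_Form.Spectral_Radius" "HOL-Analysis.Function_Topology"
    "HOL-Analysis.Topology_Euclidean_Space"
begin

hide_type (open) Finite_Cartesian_Product.vec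
unbundle no vec_syntax

section \<open>The Rayleigh principle\<close>

(* Vectors of C^d are modelled here as functions nat \<Rightarrow> complex whose entries at indices \<ge> d
   are ignored; this gives the unit sphere a compact home in the product topology. *)

definition quad_form :: "nat \<Rightarrow> (nat \<Rightarrow> nat \<Rightarrow> complex) \<Rightarrow> (nat \<Rightarrow> complex) \<Rightarrow> real" where
  "quad_form d m y = Re (\<Sum>i<d. \<Sum>j<d. m i j * y j * cnj (y i))"

definition sq_norm :: "nat \<Rightarrow> (nat \<Rightarrow> complex) \<Rightarrow> real" where
  "sq_norm d y = (\<Sum>i<d. (cmod (y i))\<^sup>2)"

lemma continuous_on_quad_form: "continuous_on S (quad_form d m)"
  unfolding quad_form_def
  by (intro continuous_intros continuous_on_product_then_coordinatewise continuous_on_id)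

lemma continuous_on_sq_norm: "continuous_on S (sq_norm d)"
  unfolding sq_norm_def
  by (intro continuous_intros continuous_on_product_then_coordinatewise continuous_on_id)

lemma quad_form_cong: "(\<And>i. i < d \<Longrightarrow> y i = y' i) \<Longrightarrow> quad_form d m y = quad_form d m y'"
  unfolding quad_form_def by (intro arg_cong[where f=Re] sum.cong refl) auto

lemma sq_norm_cong: "(\<And>i. i < d \<Longrightarrow> y i = y' i) \<Longrightarrow> sq_norm d y = sq_norm d y'"
  unfolding sq_norm_def by (intro sum.cong refl) auto

lemma quad_form_scale: "quad_form d m (\<lambda>i. of_real c * y i) = c\<^sup>2 * quad_form d m y"
proof -
  have "(\<Sum>i<d. \<Sum>j<d. m i j * (of_real c * y j) * cnj (of_real c * y i))
      = of_real (c\<^sup>2) * (\<Sum>i<d. \<Sum>j<d. m i j * y j * cnj (y i))"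
    by (simp add: sum_distrib_left algebra_simps power2_eq_square)
  then show ?thesis unfolding quad_form_def by simp
qed

lemma sq_norm_scale: "sq_norm d (\<lambda>i. of_real c * y i) = c\<^sup>2 * sq_norm d y"
  unfolding sq_norm_def by (simp add: sum_distrib_left norm_mult power_mult_distrib)

lemma sq_norm_nonneg: "0 \<le> sq_norm d y"
  unfolding sq_norm_def by (simp add: sum_nonneg)

lemma sq_norm_eq_0D: "sq_norm d y = 0 \<Longrightarrow> i < d \<Longrightarrow> y i = 0"
  unfolding sq_norm_def by (subst (asm) sum_nonneg_eq_0_iff) auto

lemma of_real_sq_norm: "of_real (sq_norm d y) = (\<Sum>i<d. y i * cnj (y i))"
  unfolding sq_norm_def by (simp add: complex_mult_cnj cmod_power2 of_real_sum)

lemma quad_form_shift: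
  "quad_form d (\<lambda>i j. m i j - (if i = j then of_real c else 0)) y
     = quad_form d m y - c * sq_norm d y"
proof -
  have "(\<Sum>j<d. (if i = j then of_real c else 0) * y j * cnj (y i)) = of_real c * (y i * cnj (y i))"
    if "i < d" for i
    using that by (simp add: if_distrib[of "\<lambda>x. x * _"] cong: if_cong)
  then have "(\<Sum>i<d. \<Sum>j<d. (m i j - (if i = j then of_real c else 0)) * y j * cnj (y i))
      = (\<Sum>i<d. \<Sum>j<d. m i j * y j * cnj (y i)) - of_real c * (\<Sum>i<d. y i * cnj (y i))"
    by (simp add: left_diff_distrib sum_subtractf sum_distrib_left)
  then show ?thesis unfolding quad_form_def of_real_sq_norm[symmetric] by simp
qed

lemma quad_form_add_scaled:
  assumes herm: "\<And>i j. i < d \<Longrightarrow> j < d \<Longrightarrow> m j i = cnj (m i j)"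
  shows "quad_form d m (\<lambda>i. u i + of_real t * z i) =
    quad_form d m u + 2 * t * Re (\<Sum>i<d. (\<Sum>j<d. m i j * u j) * cnj (z i)) + t\<^sup>2 * quad_form d m z"
proof -
  define A where "A = (\<Sum>i<d. \<Sum>j<d. m i j * u j * cnj (u i))"
  define B where "B = (\<Sum>i<d. \<Sum>j<d. m i j * z j * cnj (u i))"
  define C where "C = (\<Sum>i<d. \<Sum>j<d. m i j * u j * cnj (z i))"
  define D where "D = (\<Sum>i<d. \<Sum>j<d. m i j * z j * cnj (z i))"
  have "m i j * (u j + of_real t * z j) * cnj (u i + of_real t * z i) =
      m i j * u j * cnj (u i) + of_real t * (m i j * z j * cnj (u i))
      + of_real t * (m i j * u j * cnj (z i)) + of_real (t\<^sup>2) * (m i j * z j * cnj (z i))" for i j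
    by (simp add: algebra_simps power2_eq_square)
  then have expand: "(\<Sum>i<d. \<Sum>j<d. m i j * (u j + of_real t * z j) * cnj (u i + of_real t * z i))
      = A + of_real t * B + of_real t * C + of_real (t\<^sup>2) * D"
    unfolding A_def B_def C_def D_def by (simp add: sum.distrib sum_distrib_left)
  have "B = cnj C"
  proof -
    have "cnj C = (\<Sum>i<d. \<Sum>j<d. m j i * cnj (u j) * z i)"
      unfolding C_def cnj_sum by (intro sum.cong refl) (simp add: herm[symmetric])
    also have "\<dots> = B"
      unfolding B_def by (subst sum.swap) (simp add: ac_simps)
    finally show ?thesis by simp
  qed
  then have "Re (A + of_real t * B + of_real t * C + of_real (t\<^sup>2) * D) = Re A + 2 * t * Re C + t\<^sup>2 * Re D"
    by simp
  moreover have "C = (\<Sum>i<d. (\<Sum>j<d. m i j * u j) * cnj (z i))"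
    unfolding C_def by (simp add: sum_distrib_right)
  ultimately show ?thesis unfolding quad_form_def expand A_def D_def by simp
qed

lemma linear_coeff_eq_0_if_quadratic_nonpos:
  fixes a c :: real
  assumes "0 \<le> a" and nonpos: "\<And>t. 2 * t * a + t\<^sup>2 * c \<le> 0"
  shows "a = 0"
proof (rule ccontr)
  assume "a \<noteq> 0"
  with \<open>0 \<le> a\<close> have "0 < a" by simp
  define t where "t = a / (\<bar>c\<bar> + 1)"
  have "0 < t" and "t * \<bar>c\<bar> \<le> a"
    using \<open>0 < a\<close> by (auto simp: t_def field_simps)
  moreover from this have "- a \<le> t * c"
    using abs_ge_minus_self[of "t * c"] by (simp add: abs_mult)
  ultimately have "0 < t * (2 * a + t * c)"
    using \<open>0 < a\<close> by (intro mult_pos_pos) auto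
  with nonpos[of t] show False by (simp add: algebra_simps power2_eq_square)
qed

lemma quad_form_attains_max_on_sphere:
  assumes "0 < d"
  obtains u where "sq_norm d u = 1"
    "\<And>y. sq_norm d y = 1 \<Longrightarrow> (\<forall>i\<ge>d. y i = 0) \<Longrightarrow> quad_form d m y \<le> quad_form d m u"
proof -
  define S where "S = {y::nat\<Rightarrow>complex. (\<forall>i\<ge>d. y i = 0) \<and> sq_norm d y = 1}"
  define K where "K = PiE UNIV (\<lambda>i::nat. if i < d then cball (0::complex) 1 else {0})"
  have "compact K"
  proof -
    have "compactin (product_topology (\<lambda>i. euclidean) UNIV) K"
      unfolding K_def compactin_PiE by auto
    then show ?thesis by (simp add: euclidean_product_topology)
  qed
  moreover have "closed S"
  proof -
    have "S = (\<Inter>i\<in>{d..}. {y. y i = 0}) \<inter> {y. sq_norm d y = 1}"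
      unfolding S_def by auto
    then show ?thesis
      by (auto intro!: closed_INT closed_Collect_eq continuous_on_sq_norm
          continuous_on_product_coordinates continuous_on_const)
  qed
  moreover have "S \<subseteq> K"
  proof
    fix y assume y: "y \<in> S"
    have "cmod (y i) \<le> 1" if "i < d" for i
    proof -
      have "(cmod (y i))\<^sup>2 \<le> sq_norm d y"
        unfolding sq_norm_def using that by (intro member_le_sum) auto
      then show ?thesis using y by (simp add: S_def power_le_one_iff abs_le_square_iff)
    qed
    then show "y \<in> K" using y unfolding K_def S_def by (auto simp: PiE_def)
  qed
  ultimately have "compact S"
    using compact_Int_closed by (metis inf.absorb_iff2)
  moreover have "(\<lambda>i. if i = 0 then 1 else 0) \<in> S"
  proof -
    have "sq_norm d (\<lambda>i. if i = 0 then 1 else 0) = (\<Sum>i<d. if i = 0 then 1 else 0)"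
      unfolding sq_norm_def by (intro sum.cong) auto
    then show ?thesis using assms by (simp add: S_def)
  qed
  ultimately obtain u where "u \<in> S" "\<forall>y\<in>S. quad_form d m y \<le> quad_form d m u"
    using continuous_attains_sup[OF _ _ continuous_on_quad_form] by blast
  then show ?thesis using that unfolding S_def by auto
qed

lemma quad_form_le_sphere_max:
  assumes max: "\<And>y. sq_norm d y = 1 \<Longrightarrow> (\<forall>i\<ge>d. y i = 0) \<Longrightarrow> quad_form d m y \<le> \<mu>"
  shows "quad_form d m y \<le> \<mu> * sq_norm d y"
proof (cases "sq_norm d y = 0")
  case True
  then have "quad_form d m y = quad_form d m (\<lambda>_. 0)"
    by (intro quad_form_cong) (simp add: sq_norm_eq_0D)
  then show ?thesis using True by (simp add: quad_form_def)
next
  case False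
  then have "0 < sq_norm d y" using sq_norm_nonneg[of d y] by simp
  define c where "c = 1 / sqrt (sq_norm d y)"
  define w where "w i = (if i < d then of_real c * y i else 0)" for i
  have c: "c\<^sup>2 * sq_norm d y = 1" "0 < c\<^sup>2"
    using \<open>0 < sq_norm d y\<close> by (auto simp: c_def power_divide)
  have "sq_norm d w = c\<^sup>2 * sq_norm d y"
    using sq_norm_cong[of d w "\<lambda>i. of_real c * y i"] by (simp add: w_def sq_norm_scale)
  moreover have "quad_form d m w = c\<^sup>2 * quad_form d m y"
    using quad_form_cong[of d w "\<lambda>i. of_real c * y i"] by (simp add: w_def quad_form_scale)
  ultimately have "c\<^sup>2 * quad_form d m y \<le> c\<^sup>2 * (\<mu> * sq_norm d y)"
    using max[of w] c by (simp add: w_def mult.left_commute[of "c\<^sup>2"])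
  then show ?thesis using c by simp
qed

lemma nonpos_hermitian_form_kernel:
  assumes herm: "\<And>i j. i < d \<Longrightarrow> j < d \<Longrightarrow> m j i = cnj (m i j)"
    and nonpos: "\<And>y. quad_form d m y \<le> 0" and zero: "quad_form d m u = 0"
    and "i < d"
  shows "(\<Sum>j<d. m i j * u j) = 0"
proof -
  define z where "z i = (\<Sum>j<d. m i j * u j)" for i
  have "(\<Sum>i<d. (\<Sum>j<d. m i j * u j) * cnj (z i)) = of_real (sq_norm d z)"
    by (simp only: of_real_sq_norm z_def)
  then have "Re (\<Sum>i<d. (\<Sum>j<d. m i j * u j) * cnj (z i)) = sq_norm d z"
    by (simp only: Re_complex_of_real)
  then have "2 * t * sq_norm d z + t\<^sup>2 * quad_form d m z \<le> 0" for t
    using nonpos[of "\<lambda>i. u i + of_real t * z i"] by (simp add: quad_form_add_scaled[OF herm] zero)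
  then have "sq_norm d z = 0"
    by (rule linear_coeff_eq_0_if_quadratic_nonpos[OF sq_norm_nonneg])
  then have "z i = 0" using \<open>i < d\<close> by (rule sq_norm_eq_0D)
  then show ?thesis by (simp add: z_def)
qed

lemma hermitian_form_max_eigenvector:
  assumes "0 < d" and herm: "\<And>i j. i < d \<Longrightarrow> j < d \<Longrightarrow> m j i = cnj (m i j)"
  obtains u \<mu> where "sq_norm d u = 1"
    "\<And>i. i < d \<Longrightarrow> (\<Sum>j<d. m i j * u j) = of_real \<mu> * u i"
    "\<And>y. quad_form d m y \<le> \<mu> * sq_norm d y"
proof -
  obtain u where u: "sq_norm d u = 1"
    and max: "\<And>y. sq_norm d y = 1 \<Longrightarrow> (\<forall>i\<ge>d. y i = 0) \<Longrightarrow> quad_form d m y \<le> quad_form d m u"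
    using quad_form_attains_max_on_sphere[OF \<open>0 < d\<close>] by blast
  define \<mu> where "\<mu> = quad_form d m u"
  have bound: "quad_form d m y \<le> \<mu> * sq_norm d y" for y
    unfolding \<mu>_def using max by (rule quad_form_le_sphere_max)
  define m' where "m' = (\<lambda>i j. m i j - (if i = j then of_real \<mu> else 0))"
  have "(\<Sum>j<d. m' i j * u j) = 0" if "i < d" for i
  proof (rule nonpos_hermitian_form_kernel[OF _ _ _ that])
    show "m' j i = cnj (m' i j)" if "i < d" "j < d" for i j
      using herm[OF that] by (simp add: m'_def)
    show "quad_form d m' y \<le> 0" for y
      using bound[of y] by (simp add: m'_def quad_form_shift)
    show "quad_form d m' u = 0"
      by (simp add: m'_def quad_form_shift u \<mu>_def)
  qed
  then have eigen: "(\<Sum>j<d. m i j * u j) = of_real \<mu> * u i" if "i < d" for i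
    using that
    by (simp add: m'_def left_diff_distrib sum_subtractf if_distrib[of "\<lambda>x. x * _"] cong: if_cong)
  from u eigen bound show ?thesis by (rule that)
qed

section \<open>Hermitian and positive semidefinite matrices\<close>

lemma cscalar_prod_sum:
  "v \<in> carrier_vec d \<Longrightarrow> w \<in> carrier_vec d \<Longrightarrow> v \<bullet>c w = (\<Sum>i<d. v $ i * cnj (w $ i))"
  by (simp add: scalar_prod_def lessThan_atLeast0)

lemma mult_mat_vec_index_sum:
  "M \<in> carrier_mat d d \<Longrightarrow> v \<in> carrier_vec d \<Longrightarrow> i < d \<Longrightarrow>
    (M *\<^sub>v v) $ i = (\<Sum>j<d. M $$ (i,j) * v $ j)"
  by (simp add: scalar_prod_def row_def lessThan_atLeast0)

lemma cscalar_prod_mult_mat_vec: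
  assumes "M \<in> carrier_mat d d" "v \<in> carrier_vec d" "w \<in> carrier_vec d"
  shows "(M *\<^sub>v v) \<bullet>c w = (\<Sum>i<d. \<Sum>j<d. M $$ (i,j) * v $ j * cnj (w $ i))"
proof -
  have "(M *\<^sub>v v) \<bullet>c w = (\<Sum>i<d. (M *\<^sub>v v) $ i * cnj (w $ i))"
    using assms by (intro cscalar_prod_sum) auto
  also have "\<dots> = (\<Sum>i<d. (\<Sum>j<d. M $$ (i,j) * v $ j) * cnj (w $ i))"
    using assms by (intro sum.cong refl) (subst mult_mat_vec_index_sum[of _ d], auto)
  finally show ?thesis by (simp add: sum_distrib_right)
qed

lemma quad_form_mat_vec:
  "M \<in> carrier_mat d d \<Longrightarrow> v \<in> carrier_vec d \<Longrightarrow>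
    quad_form d (\<lambda>i j. M $$ (i,j)) (($) v) = Re ((M *\<^sub>v v) \<bullet>c v)"
  by (simp add: quad_form_def cscalar_prod_mult_mat_vec)

lemma sq_norm_vec:
  assumes "v \<in> carrier_vec d"
  shows "sq_norm d (($) v) = Re (v \<bullet>c v)"
proof -
  have "of_real (sq_norm d (($) v)) = v \<bullet>c v"
    by (simp only: of_real_sq_norm cscalar_prod_sum[OF assms assms])
  then show ?thesis by (metis Re_complex_of_real)
qed

lemma hermitian_iff_index:
  assumes M: "M \<in> carrier_mat d d"
  shows "hermitian M \<longleftrightarrow> (\<forall>i<d. \<forall>j<d. M $$ (j,i) = cnj (M $$ (i,j)))"
proof -
  have adj: "mat_adjoint M \<in> carrier_mat d d"
    using M by (auto simp: mat_adjoint_def mat_of_rows_def)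
  have adj_index: "mat_adjoint M $$ (i,j) = cnj (M $$ (j,i))" if "i < d" "j < d" for i j
    using M that by (simp add: mat_adjoint_def mat_of_rows_index)
  show ?thesis
  proof
    assume "hermitian M"
    then show "\<forall>i<d. \<forall>j<d. M $$ (j,i) = cnj (M $$ (i,j))"
      using adj_index unfolding hermitian_def by metis
  next
    assume herm: "\<forall>i<d. \<forall>j<d. M $$ (j,i) = cnj (M $$ (i,j))"
    have "cnj (M $$ (j,i)) = M $$ (i,j)" if "i < d" "j < d" for i j
      using herm that by metis
    with adj M show "hermitian M"
      unfolding hermitian_def by (intro eq_matI) (simp_all add: adj_index)
  qed
qed

lemma cscalar_prod_hermitian:
  assumes "hermitian M" and M: "M \<in> carrier_mat d d"
    and v: "v \<in> carrier_vec d" and w: "w \<in> carrier_vec d"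
  shows "(M *\<^sub>v v) \<bullet>c w = v \<bullet>c (M *\<^sub>v w)"
proof -
  have herm: "cnj (M $$ (j,i)) = M $$ (i,j)" if "i < d" "j < d" for i j
    using assms(1) that unfolding hermitian_iff_index[OF M] by metis
  have "cnj ((M *\<^sub>v w) $ j) = (\<Sum>i<d. M $$ (i,j) * cnj (w $ i))" if "j < d" for j
    using M w that by (subst mult_mat_vec_index_sum[of _ d]) (auto simp: cnj_sum herm)
  then have "v \<bullet>c (M *\<^sub>v w) = (\<Sum>j<d. \<Sum>i<d. M $$ (i,j) * v $ j * cnj (w $ i))"
    using M v w by (simp add: cscalar_prod_sum[of _ d] sum_distrib_left ac_simps)
  also have "\<dots> = (M *\<^sub>v v) \<bullet>c w"
    using M v w by (subst sum.swap) (simp add: cscalar_prod_mult_mat_vec)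
  finally show ?thesis by simp
qed

lemma hermitian_if_cscalar_prod_sym:
  assumes M: "M \<in> carrier_mat d d"
    and sym: "\<And>v w. v \<in> carrier_vec d \<Longrightarrow> w \<in> carrier_vec d \<Longrightarrow> (M *\<^sub>v v) \<bullet>c w = v \<bullet>c (M *\<^sub>v w)"
  shows "hermitian M"
  unfolding hermitian_iff_index[OF M]
proof (intro allI impI)
  fix i j assume "i < d" "j < d"
  then have "(M *\<^sub>v unit_vec d i) \<bullet>c unit_vec d j = M $$ (j,i)"
    and "unit_vec d i \<bullet>c (M *\<^sub>v unit_vec d j) = cnj (M $$ (i,j))"
    using M
    by (auto simp: cscalar_prod_mult_mat_vec cscalar_prod_sum[of _ d] if_distrib[of cnj]
        if_distrib[of "\<lambda>x. _ * x"] if_distrib[of "\<lambda>x. x * _"] cong: if_cong)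
  with sym[of "unit_vec d i" "unit_vec d j"] show "M $$ (j,i) = cnj (M $$ (i,j))" by simp
qed

lemma cscalar_prod_hermitian_conj:
  assumes P: "hermitian P" "P \<in> carrier_mat d d" and K: "K \<in> carrier_mat d d"
    and v: "v \<in> carrier_vec d" and w: "w \<in> carrier_vec d"
  shows "((P * K * P) *\<^sub>v v) \<bullet>c w = (K *\<^sub>v (P *\<^sub>v v)) \<bullet>c (P *\<^sub>v w)"
proof -
  have "(P * K * P) *\<^sub>v v = P *\<^sub>v (K *\<^sub>v (P *\<^sub>v v))"
    using P K v by (simp add: assoc_mult_mat_vec[of _ d d _ d])
  then show ?thesis
    using P K v w by (simp add: cscalar_prod_hermitian[of P d])
qed

lemma psd_hermitian_conj:
  assumes K: "psd d K" and P: "hermitian P" "P \<in> carrier_mat d d"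
  shows "psd d (P * K * P)"
proof -
  have Kc: "K \<in> carrier_mat d d" and "hermitian K"
    using K by (auto simp: psd_def)
  have PKP: "P * K * P \<in> carrier_mat d d"
    using Kc P by simp
  have "hermitian (P * K * P)"
  proof (rule hermitian_if_cscalar_prod_sym[OF PKP])
    fix v w :: "complex vec" assume v: "v \<in> carrier_vec d" and w: "w \<in> carrier_vec d"
    have "((P * K * P) *\<^sub>v v) \<bullet>c w = (K *\<^sub>v (P *\<^sub>v v)) \<bullet>c (P *\<^sub>v w)"
      by (rule cscalar_prod_hermitian_conj[OF P Kc v w])
    also have "\<dots> = (P *\<^sub>v v) \<bullet>c (K *\<^sub>v (P *\<^sub>v w))"
      using P v w by (intro cscalar_prod_hermitian[OF \<open>hermitian K\<close> Kc]) auto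
    also have "\<dots> = v \<bullet>c (P *\<^sub>v (K *\<^sub>v (P *\<^sub>v w)))"
      using Kc P v w by (simp add: cscalar_prod_hermitian[of P d])
    also have "\<dots> = v \<bullet>c ((P * K * P) *\<^sub>v w)"
      using Kc P w by (simp add: assoc_mult_mat_vec[of _ d d _ d])
    finally show "((P * K * P) *\<^sub>v v) \<bullet>c w = v \<bullet>c ((P * K * P) *\<^sub>v w)" .
  qed
  moreover have "0 \<le> Re (((P * K * P) *\<^sub>v v) \<bullet>c v)" if "v \<in> carrier_vec d" for v
    using K P that cscalar_prod_hermitian_conj[OF P Kc that that] by (simp add: psd_def)
  ultimately show ?thesis using PKP by (simp add: psd_def)
qed

lemma finite_eigenvalues: "(A :: complex mat) \<in> carrier_mat n n \<Longrightarrow> finite {ev. eigenvalue A ev}"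
  using card_finite_spectrum(1) by (simp add: spectrum_def)

lemma hermitian_eigenvalue_bounds_form:
  assumes M: "M \<in> carrier_mat d d" "hermitian M" and "0 < d"
  obtains \<mu> where "eigenvalue M (of_real \<mu>)"
    "\<And>v. v \<in> carrier_vec d \<Longrightarrow> Re ((M *\<^sub>v v) \<bullet>c v) \<le> \<mu> * Re (v \<bullet>c v)"
proof -
  have herm: "M $$ (j,i) = cnj (M $$ (i,j))" if "i < d" "j < d" for i j
    using M(2) that unfolding hermitian_iff_index[OF M(1)] by blast
  obtain u \<mu> where u: "sq_norm d u = 1"
    and eigen: "\<And>i. i < d \<Longrightarrow> (\<Sum>j<d. M $$ (i,j) * u j) = of_real \<mu> * u i"
    and bound: "\<And>y. quad_form d (\<lambda>i j. M $$ (i,j)) y \<le> \<mu> * sq_norm d y"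
    using hermitian_form_max_eigenvector[of d "\<lambda>i j. M $$ (i,j)"] herm \<open>0 < d\<close> by blast
  have "eigenvector M (Matrix.vec d u) (of_real \<mu>)"
    unfolding eigenvector_def
  proof (intro conjI)
    show "Matrix.vec d u \<noteq> 0\<^sub>v (dim_row M)"
    proof
      assume "Matrix.vec d u = 0\<^sub>v (dim_row M)"
      then have "sq_norm d u = sq_norm d (\<lambda>_. 0)"
        using M by (intro sq_norm_cong) (metis index_vec index_zero_vec(1) carrier_matD(1))
      with u show False by (simp add: sq_norm_def)
    qed
    show "M *\<^sub>v Matrix.vec d u = of_real \<mu> \<cdot>\<^sub>v Matrix.vec d u"
    proof (rule eq_vecI)
      fix i assume "i < dim_vec (of_real \<mu> \<cdot>\<^sub>v Matrix.vec d u)"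
      then show "(M *\<^sub>v Matrix.vec d u) $ i = (of_real \<mu> \<cdot>\<^sub>v Matrix.vec d u) $ i"
        using M eigen by (subst mult_mat_vec_index_sum[of _ d]) auto
    qed (use M in simp)
  qed (use M in auto)
  then have "eigenvalue M (of_real \<mu>)"
    unfolding eigenvalue_def by blast
  moreover have "Re ((M *\<^sub>v v) \<bullet>c v) \<le> \<mu> * Re (v \<bullet>c v)" if "v \<in> carrier_vec d" for v
    using bound[of "($) v"] by (simp add: quad_form_mat_vec[OF M(1) that] sq_norm_vec[OF that])
  ultimately show ?thesis by (rule that)
qed

lemma hermitian_form_le_lambda_max:
  assumes M: "M \<in> carrier_mat d d" "hermitian M" and v: "v \<in> carrier_vec d"
  shows "Re ((M *\<^sub>v v) \<bullet>c v) \<le> lambda_max M * Re (v \<bullet>c v)"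
proof (cases "d = 0")
  case True
  with M v show ?thesis by (simp add: cscalar_prod_sum[of _ 0])
next
  case False
  then obtain \<mu> where "eigenvalue M (of_real \<mu>)"
    and bound: "Re ((M *\<^sub>v v) \<bullet>c v) \<le> \<mu> * Re (v \<bullet>c v)"
    using hermitian_eigenvalue_bounds_form[OF M] v by blast
  then have "\<mu> \<le> lambda_max M"
    unfolding lambda_max_def
    by (intro Max_ge finite_imageI finite_eigenvalues[OF M(1)]) force
  then have "\<mu> * Re (v \<bullet>c v) \<le> lambda_max M * Re (v \<bullet>c v)"
    using sq_norm_vec[OF v] sq_norm_nonneg[of d] by (metis mult_right_mono)
  with bound show ?thesis by linarith
qed

lemma lambda_max_nonneg:
  assumes "psd d M" "0 < d"
  shows "0 \<le> lambda_max M"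
proof -
  have M: "M \<in> carrier_mat d d" "hermitian M"
    using assms(1) by (auto simp: psd_def)
  have "0 \<le> Re ((M *\<^sub>v unit_vec d 0) \<bullet>c unit_vec d 0)"
    using assms by (simp add: psd_def)
  also have "\<dots> \<le> lambda_max M * Re (unit_vec d 0 \<bullet>c unit_vec d 0)"
    using M by (rule hermitian_form_le_lambda_max) simp
  also have "unit_vec d 0 \<bullet>c unit_vec d 0 = (1 :: complex)"
    using \<open>0 < d\<close> by (subst scalar_prod_left_unit[where n=d]) auto
  finally show ?thesis by simp
qed

section \<open>Rank-one operators below a projection\<close>

lemma outer_le_imp_cmod_sq_le:
  assumes le: "loewner_le d (outer x) M" and x: "x \<in> carrier_vec d" and v: "v \<in> carrier_vec d"
  shows "(cmod (v \<bullet>c x))\<^sup>2 \<le> Re ((M *\<^sub>v v) \<bullet>c v)"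
proof -
  have M: "M \<in> carrier_mat d d"
    using le by (simp add: loewner_le_def)
  have "outer x \<in> carrier_mat d d"
    using x by (simp add: outer_def)
  then have MO: "M - outer x \<in> carrier_mat d d"
    by (rule minus_carrier_mat)
  have "((M - outer x) *\<^sub>v v) \<bullet>c v
      = (\<Sum>i<d. \<Sum>j<d. M $$ (i,j) * v $ j * cnj (v $ i) - x $ i * cnj (x $ j) * v $ j * cnj (v $ i))"
    unfolding cscalar_prod_mult_mat_vec[OF MO v v]
    using M x by (intro sum.cong refl) (simp add: outer_def algebra_simps)
  also have "\<dots> = (M *\<^sub>v v) \<bullet>c v - (\<Sum>i<d. \<Sum>j<d. x $ i * cnj (x $ j) * v $ j * cnj (v $ i))"
    using M v by (simp add: sum_subtractf cscalar_prod_mult_mat_vec)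
  also have "(\<Sum>i<d. \<Sum>j<d. x $ i * cnj (x $ j) * v $ j * cnj (v $ i))
      = (\<Sum>i<d. x $ i * cnj (v $ i)) * (\<Sum>j<d. v $ j * cnj (x $ j))"
    unfolding sum_product by (intro sum.cong refl) (simp add: mult_ac)
  also have "\<dots> = cnj (v \<bullet>c x) * (v \<bullet>c x)"
    using v x by (simp add: cscalar_prod_sum[of _ d] cnj_sum mult.commute)
  finally have "Re (((M - outer x) *\<^sub>v v) \<bullet>c v) = Re ((M *\<^sub>v v) \<bullet>c v) - (cmod (v \<bullet>c x))\<^sup>2"
    by (simp add: complex_mult_cnj[of "v \<bullet>c x", unfolded mult.commute[of _ "cnj _"]] cmod_power2)
  moreover have "0 \<le> Re (((M - outer x) *\<^sub>v v) \<bullet>c v)"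
    using le v by (simp add: loewner_le_def psd_def)
  ultimately show ?thesis by simp
qed

lemma outer_le_proj_fixes:
  assumes P: "orth_proj d P" and x: "x \<in> carrier_vec d" and le: "loewner_le d (outer x) P"
  shows "P *\<^sub>v x = x"
proof -
  have Pc: "P \<in> carrier_mat d d" and "P * P = P" and "hermitian P"
    using P by (auto simp: orth_proj_def)
  define y where "y = x - P *\<^sub>v x"
  have y: "y \<in> carrier_vec d"
    using Pc x by (simp add: y_def)
  have "P *\<^sub>v y = 0\<^sub>v d"
    using Pc x \<open>P * P = P\<close>
    by (simp add: y_def mult_minus_distrib_mat_vec assoc_mult_mat_vec[symmetric, of _ d d _ d])
  then have "(cmod (y \<bullet>c x))\<^sup>2 \<le> 0"
    using outer_le_imp_cmod_sq_le[OF le x y] y by simp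
  then have "y \<bullet>c x = 0"
    by simp
  moreover have "y \<bullet>c (P *\<^sub>v x) = 0"
    using cscalar_prod_hermitian[OF \<open>hermitian P\<close> Pc y x] \<open>P *\<^sub>v y = 0\<^sub>v d\<close> x by simp
  moreover have "y \<bullet>c y = y \<bullet>c x - y \<bullet>c (P *\<^sub>v x)"
    using Pc x y by (simp add: y_def cscalar_prod_sum[of _ d] sum_subtractf ring_distribs)
  ultimately have "y = 0\<^sub>v d"
    using y by simp
  have "(P *\<^sub>v x) $ i = x $ i" if "i < d" for i
  proof -
    have "(x - P *\<^sub>v x) $ i = 0\<^sub>v d $ i"
      using \<open>y = 0\<^sub>v d\<close> by (simp only: y_def)
    then show ?thesis
      using that Pc x by simp
  qed
  then show ?thesis
    using Pc x by (intro eq_vecI) auto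
qed

lemma outer_le_proj_norm_le_1:
  assumes P: "orth_proj d P" and x: "x \<in> carrier_vec d" and le: "loewner_le d (outer x) P"
  shows "Re (x \<bullet>c x) \<le> 1"
proof -
  define r where "r = sq_norm d (($) x)"
  have "x \<bullet>c x = of_real r"
    using of_real_sq_norm[of d "($) x"] x by (simp add: r_def cscalar_prod_sum)
  moreover have "(cmod (x \<bullet>c x))\<^sup>2 \<le> Re (x \<bullet>c x)"
    using outer_le_imp_cmod_sq_le[OF le x x] outer_le_proj_fixes[OF P x le] by simp
  ultimately have "r * r \<le> r * 1"
    by (simp add: power2_eq_square)
  moreover have "0 \<le> r"
    by (simp add: r_def sq_norm_nonneg)
  ultimately show ?thesis
    using \<open>x \<bullet>c x = of_real r\<close> by (cases "r = 0") (auto dest: mult_le_cancel_left_pos[THEN iffD1, rotated])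
qed

section \<open>The operator \<open>A \<otimes> I\<^sub>n\<close> and the partial trace\<close>

lemma sum_atLeastLessThan_add_nat: "sum f {m..<m + n} = (\<Sum>b<n. f (m + b :: nat))"
  by (induction n) auto

lemma sum_lessThan_mult_nat: "(\<Sum>i<k * n. f i) = (\<Sum>c<k. \<Sum>b<n. f (c * n + b :: nat))"
  using sum.nat_group[of f n k] by (simp add: sum_atLeastLessThan_add_nat)

lemma mult_add_less_mult_nat:
  assumes "c < k" "b < n"
  shows "c * n + b < k * (n :: nat)"
proof -
  have "c * n + b < Suc c * n" using assms(2) by simp
  also have "\<dots> \<le> k * n" using assms(1) by (intro mult_le_mono1) simp
  finally show ?thesis .
qed

lemma kron_one_carrier: "A \<in> carrier_mat k k \<Longrightarrow> kron A (1\<^sub>m n) \<in> carrier_mat (k * n) (k * n)"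
  by (simp add: kron_def)

lemma kron_one_index:
  assumes "A \<in> carrier_mat k k" "i < k * n" "j < k * n"
  shows "kron A (1\<^sub>m n) $$ (i,j) = (if i mod n = j mod n then A $$ (i div n, j div n) else 0)"
proof -
  have "0 < n" using assms(2) by (cases n) auto
  with assms show ?thesis by (simp add: kron_def)
qed

text \<open>Slices along the second tensor factor: \<open>v = (\<Sum>b<n. slice_snd k n v b \<otimes> e\<^sub>b)\<close>.\<close>

definition slice_snd :: "nat \<Rightarrow> nat \<Rightarrow> complex vec \<Rightarrow> nat \<Rightarrow> complex vec" where
  "slice_snd k n v b = Matrix.vec k (\<lambda>a. v $ (a * n + b))"

lemma kron_one_mult_vec_index:
  assumes A: "A \<in> carrier_mat k k" and v: "v \<in> carrier_vec (k * n)" and "c < k" "b < n"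
  shows "(kron A (1\<^sub>m n) *\<^sub>v v) $ (c * n + b) = (\<Sum>a<k. A $$ (c,a) * v $ (a * n + b))"
proof -
  have cb: "c * n + b < k * n" and [simp]: "(c * n + b) div n = c" "(c * n + b) mod n = b"
    using assms(3,4) by (auto simp: mult_add_less_mult_nat)
  have "(kron A (1\<^sub>m n) *\<^sub>v v) $ (c * n + b)
      = (\<Sum>a<k. \<Sum>b'<n. kron A (1\<^sub>m n) $$ (c * n + b, a * n + b') * v $ (a * n + b'))"
    using A v cb by (simp add: mult_mat_vec_index_sum[OF kron_one_carrier] sum_lessThan_mult_nat)
  also have "\<dots> = (\<Sum>a<k. \<Sum>b'<n. if b' = b then A $$ (c,a) * v $ (a * n + b) else 0)"
    using A assms(3,4) by (intro sum.cong refl) (auto simp: kron_one_index mult_add_less_mult_nat)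
  finally show ?thesis using \<open>b < n\<close> by simp
qed

lemma cscalar_prod_kron_one:
  assumes A: "A \<in> carrier_mat k k" and v: "v \<in> carrier_vec (k * n)" and w: "w \<in> carrier_vec (k * n)"
  shows "(kron A (1\<^sub>m n) *\<^sub>v v) \<bullet>c w = (\<Sum>b<n. (A *\<^sub>v slice_snd k n v b) \<bullet>c slice_snd k n w b)"
proof -
  have "(kron A (1\<^sub>m n) *\<^sub>v v) \<bullet>c w = (\<Sum>i<k * n. (kron A (1\<^sub>m n) *\<^sub>v v) $ i * cnj (w $ i))"
    by (intro cscalar_prod_sum mult_mat_vec_carrier[OF kron_one_carrier[OF A]] v w)
  also have "\<dots> = (\<Sum>c<k. \<Sum>b<n. (kron A (1\<^sub>m n) *\<^sub>v v) $ (c * n + b) * cnj (w $ (c * n + b)))"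
    by (rule sum_lessThan_mult_nat)
  also have "\<dots> = (\<Sum>c<k. \<Sum>b<n. (\<Sum>a<k. A $$ (c,a) * v $ (a * n + b)) * cnj (w $ (c * n + b)))"
    by (intro sum.cong refl) (subst kron_one_mult_vec_index[OF A v], auto)
  also have "\<dots> = (\<Sum>b<n. \<Sum>c<k. (\<Sum>a<k. A $$ (c,a) * v $ (a * n + b)) * cnj (w $ (c * n + b)))"
    by (rule sum.swap)
  also have "\<dots> = (\<Sum>b<n. (A *\<^sub>v slice_snd k n v b) \<bullet>c slice_snd k n w b)"
    using A by (simp add: cscalar_prod_mult_mat_vec[of _ k] slice_snd_def sum_distrib_right)
  finally show ?thesis .
qed

lemma hermitian_kron_one:
  assumes A: "hermitian A" "A \<in> carrier_mat k k"
  shows "hermitian (kron A (1\<^sub>m n))"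
  unfolding hermitian_iff_index[OF kron_one_carrier[OF A(2)]]
proof (intro allI impI)
  fix i j assume "i < k * n" "j < k * n"
  then have "i div n < k" "j div n < k"
    by (auto simp: less_mult_imp_div_less)
  then have "A $$ (j div n, i div n) = cnj (A $$ (i div n, j div n))"
    using A unfolding hermitian_iff_index[OF A(2)] by blast
  then show "kron A (1\<^sub>m n) $$ (j,i) = cnj (kron A (1\<^sub>m n) $$ (i,j))"
    using A(2) \<open>i < k * n\<close> \<open>j < k * n\<close> by (simp add: kron_one_index)
qed

lemma psd_kron_one:
  assumes A: "psd k A"
  shows "psd (k * n) (kron A (1\<^sub>m n))"
proof -
  have Ac: "A \<in> carrier_mat k k" and "hermitian A"
    using A by (auto simp: psd_def)
  have "0 \<le> Re ((kron A (1\<^sub>m n) *\<^sub>v v) \<bullet>c v)" if "v \<in> carrier_vec (k * n)" for v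
    using A Ac that
    by (auto simp: cscalar_prod_kron_one Re_sum psd_def slice_snd_def intro!: sum_nonneg)
  with Ac \<open>hermitian A\<close> show ?thesis
    by (simp add: psd_def kron_one_carrier hermitian_kron_one)
qed

lemma mtrace_ptrace2_outer_mult:
  assumes A: "A \<in> carrier_mat k k" and x: "x \<in> carrier_vec (k * n)"
  shows "mtrace (ptrace2 k n (outer x) * A) = (kron A (1\<^sub>m n) *\<^sub>v x) \<bullet>c x"
proof -
  define X where "X = ptrace2 k n (outer x)"
  have X: "X \<in> carrier_mat k k"
    by (simp add: X_def ptrace2_def)
  have X_index: "X $$ (a,c) = (\<Sum>b<n. x $ (a * n + b) * cnj (x $ (c * n + b)))" if "a < k" "c < k" for a c
    using x that by (simp add: X_def ptrace2_def outer_def mult_add_less_mult_nat)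
  have "mtrace (X * A) = (\<Sum>a<k. \<Sum>c<k. X $$ (a,c) * A $$ (c,a))"
    using X A by (simp add: mtrace_def scalar_prod_def lessThan_atLeast0)
  also have "\<dots> = (\<Sum>a<k. \<Sum>c<k. \<Sum>b<n. A $$ (c,a) * x $ (a * n + b) * cnj (x $ (c * n + b)))"
    by (intro sum.cong refl) (simp add: X_index sum_distrib_left mult_ac)
  also have "\<dots> = (\<Sum>c<k. \<Sum>b<n. \<Sum>a<k. A $$ (c,a) * x $ (a * n + b) * cnj (x $ (c * n + b)))"
    by (subst sum.swap) (rule sum.cong[OF refl sum.swap])
  also have "\<dots> = (\<Sum>b<n. \<Sum>c<k. \<Sum>a<k. A $$ (c,a) * x $ (a * n + b) * cnj (x $ (c * n + b)))"
    by (rule sum.swap)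
  also have "\<dots> = (kron A (1\<^sub>m n) *\<^sub>v x) \<bullet>c x"
    using A x by (simp add: cscalar_prod_kron_one cscalar_prod_mult_mat_vec[of _ k] slice_snd_def)
  finally show ?thesis by (simp add: X_def)
qed

lemma density_dim_pos: "A \<in> density k \<Longrightarrow> 0 < k"
  by (cases "k = 0") (auto simp: density_def psd_def mtrace_def)

lemma ptrace2_outer_trace_le_lambda_max:
  assumes "0 < n" and A: "A \<in> density k" and P: "orth_proj (k * n) P"
    and x: "x \<in> carrier_vec (k * n)" and le: "loewner_le (k * n) (outer x) P"
  shows "Re (mtrace (ptrace2 k n (outer x) * A)) \<le> lambda_max (P * kron A (1\<^sub>m n) * P)"
proof -
  define K where "K = kron A (1\<^sub>m n)"
  have "psd k A"
    using A by (simp add: density_def)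
  then have Ac: "A \<in> carrier_mat k k" and Kc: "K \<in> carrier_mat (k * n) (k * n)"
    by (auto simp: psd_def K_def kron_one_carrier)
  have Pc: "P \<in> carrier_mat (k * n) (k * n)" and "hermitian P"
    using P by (auto simp: orth_proj_def)
  have PKP: "psd (k * n) (P * K * P)"
    unfolding K_def using psd_kron_one[OF \<open>psd k A\<close>] \<open>hermitian P\<close> Pc by (rule psd_hermitian_conj)
  have "Re (mtrace (ptrace2 k n (outer x) * A)) = Re ((K *\<^sub>v x) \<bullet>c x)"
    using Ac x by (simp add: K_def mtrace_ptrace2_outer_mult)
  also have "\<dots> = Re (((P * K * P) *\<^sub>v x) \<bullet>c x)"
    using cscalar_prod_hermitian_conj[OF \<open>hermitian P\<close> Pc Kc x x] by (simp add: outer_le_proj_fixes[OF P x le])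
  also have "\<dots> \<le> lambda_max (P * K * P) * Re (x \<bullet>c x)"
    using PKP x by (intro hermitian_form_le_lambda_max) (auto simp: psd_def)
  also have "\<dots> \<le> lambda_max (P * K * P)"
    using lambda_max_nonneg[OF PKP] density_dim_pos[OF A] \<open>0 < n\<close> outer_le_proj_norm_le_1[OF P x le]
    by (intro mult_left_le) auto
  finally show ?thesis by (simp add: K_def)
qed

theorem lemma3p5:
  fixes k :: nat and P :: "nat \<Rightarrow> complex mat" and f :: "complex mat \<Rightarrow> real"
    and x :: "nat \<Rightarrow> complex vec"
  assumes proj: "\<And>n. orth_proj (k * n) (P n)"
    and C1: "cond_C1 k P f"
    and xdim: "\<And>n. x n \<in> carrier_vec (k * n)"
    and xle: "\<And>n. loewner_le (k * n) (outer (x n)) (P n)"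
    and A: "A \<in> density k"
  shows "limsup (\<lambda>n. ereal (Re (mtrace (ptrace2 k n (outer (x n)) * A)))) \<le> ereal (f A)"
proof -
  have "\<forall>\<^sub>F n in sequentially. ereal (Re (mtrace (ptrace2 k n (outer (x n)) * A)))
      \<le> ereal (lambda_max (P n * kron A (1\<^sub>m n) * P n))"
    using eventually_gt_at_top[of 0]
    by eventually_elim (simp add: ptrace2_outer_trace_le_lambda_max[OF _ A proj xdim xle])
  then have "limsup (\<lambda>n. ereal (Re (mtrace (ptrace2 k n (outer (x n)) * A))))
      \<le> limsup (\<lambda>n. ereal (lambda_max (P n * kron A (1\<^sub>m n) * P n)))"
    by (rule Limsup_mono)
  also have "\<dots> = ereal (f A)"
    using C1 A unfolding cond_C1_def
    by (intro lim_imp_Limsup trivial_limit_sequentially) (simp add: tendsto_ereal)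
  finally show ?thesis .
qed

end
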